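(* Let $d\in\mathbb N$, $D=[-\frac12,\frac12]^d$ and $\Phi:\mathbb R^d\to[0,\infty)$. Assume there exists $x_\star$ in the interior of $D$ such that for every $r>0$, $\inf_{x\in D,\|x-x_\star\|>r}\Phi(x)-\Phi(x_\star)>0$; $\Phi$ is $(4d+3)$ times continuously differentiable in a neighborhood of $x_\star$ with $H_\star=\nabla^2\Phi(x_\star)$ positive definite; and $\Phi$ is $d$ times continuously differentiable on $\mathbb R^d$. Write $H_\star=QDQ^\top$ with $Q$ orthogonal and $D=\mathrm{diag}(\lambda_1,\dots,\lambda_d)$, $\lambda_i>0$. Fix $\tau\in(0,1)$ and set $g_n(x)=x_\star+\sqrt{2|\ln\tau|/n}\,QD^{-1/2}x$ and $\Theta_n(x)=\exp(-n\Phi(x))$. Then, with the norm $\|\cdot\|_\gamma$ defined below (for any positive POD weights $\gamma$), $\|\Theta_n\circ g_n\|_\gamma\in\mathcal O(1)$ as $n\to\infty$.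
   Context: POD weights: $\gamma_\nu=\alpha_{|\nu|}\prod_{j\in\nu}\beta_j$ for $\nu\subseteq\{1,\dots,d\}$ with $\alpha_0=\alpha_1=1$, $\alpha_2,\ldots>0$, $\beta_1\ge\beta_2\ge\dots>0$. For $F:[-\frac12,\frac12]^d\to\mathbb R$ with continuous mixed first-order derivatives, $$\|F\|_\gamma^2=\sum_{\nu\subseteq\{1,\dots,d\}}\frac1{\gamma_\nu}\int_{[-\frac12,\frac12]^{|\nu|}}\Big(\int_{[-\frac12,\frac12]^{d-|\nu|}}\frac{\partial^{|\nu|}F}{\partial x_\nu}(x)\,dx_{\{1,\dots,d\}\setminus\nu}\Big)^2dx_\nu.$$ *)

theory Defs
  imports "HOL-Analysis.Analysis" "HOL-Library.Landau_Symbols"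
begin

definition partial_deriv :: "'n::finite \<Rightarrow> (real^'n \<Rightarrow> real) \<Rightarrow> real^'n \<Rightarrow> real" where
  "partial_deriv j f x = deriv (\<lambda>t. f (\<chi> i. if i = j then t else x $ i)) (x $ j)"

text \<open>Mixed first-order derivative with respect to the coordinates in nu
  (taken in some fixed enumeration order of nu; under the continuity hypotheses
  the order is irrelevant).\<close>
definition mixed_deriv :: "'n::finite set \<Rightarrow> (real^'n \<Rightarrow> real) \<Rightarrow> real^'n \<Rightarrow> real" where
  "mixed_deriv nu f = foldr partial_deriv (SOME xs. set xs = nu \<and> distinct xs) f"

primrec C_k_on :: "nat \<Rightarrow> (real^'n::finite) set \<Rightarrow> (real^'n \<Rightarrow> real) \<Rightarrow> bool" where
  "C_k_on 0 U f = continuous_on U f"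
| "C_k_on (Suc k) U f =
     ((\<forall>x\<in>U. f differentiable (at x)) \<and> (\<forall>j. C_k_on k U (partial_deriv j f)))"

definition cube_meas :: "'n set \<Rightarrow> ('n \<Rightarrow> real) measure" where
  "cube_meas I = PiM I (\<lambda>_. restrict_space lborel {-1/2..1/2::real})"

definition unit_cube :: "(real^'n::finite) set" where
  "unit_cube = cbox (- ((1/2) *\<^sub>R One)) ((1/2) *\<^sub>R One)"

definition pod_weight :: "(nat \<Rightarrow> real) \<Rightarrow> ('n \<Rightarrow> real) \<Rightarrow> 'n set \<Rightarrow> real" where
  "pod_weight \<alpha> \<beta> nu = \<alpha> (card nu) * (\<Prod>j\<in>nu. \<beta> j)"

definition gamma_norm :: "('n::finite set \<Rightarrow> real) \<Rightarrow> (real^'n \<Rightarrow> real) \<Rightarrow> real" where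
  "gamma_norm \<gamma> F = sqrt (\<Sum>nu\<in>Pow UNIV. (1 / \<gamma> nu) *
      (\<integral>y. (\<integral>z. mixed_deriv nu F (\<chi> i. if i \<in> nu then y i else z i)
                 \<partial>cube_meas (UNIV - nu))\<^sup>2 \<partial>cube_meas nu))"

end

theory Submission
  imports Defs "HOL-Probability.Probability"
begin

text \<open>
  Write \<open>h\<^sub>n = sqrt (2 \<bar>ln \<tau>\<bar> / n)\<close> and \<open>L x = Q D\<^sup>-\<^sup>1\<^sup>/\<^sup>2 x\<close>. Every first partial derivative of
  \<open>F\<^sub>n = exp (- n \<Phi> (x\<^sub>\<star> + h\<^sub>n L x))\<close> is \<open>F\<^sub>n\<close> times a sum of terms
  \<open>- n h\<^sub>n a \<partial>\<^sub>l\<Phi> (x\<^sub>\<star> + h\<^sub>n L x)\<close>. Since \<open>x\<^sub>\<star>\<close> is an interior minimiser, \<open>\<partial>\<^sub>l\<Phi>\<close> vanishes at \<open>x\<^sub>\<star>\<close>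
  and is \<open>O(h\<^sub>n)\<close> on the zoomed cube, so these terms are \<open>O(n h\<^sub>n\<^sup>2) = O(1)\<close>; each further
  derivative of such a term contributes one more factor \<open>h\<^sub>n\<close>, and \<open>n h\<^sub>n\<^sup>2\<close> stays bounded.
  Together with \<open>0 < F\<^sub>n \<le> 1\<close> this bounds all mixed derivatives of order at most \<open>d\<close>
  uniformly on the cube for large \<open>n\<close>, hence also the weighted norm, whose inner integrals
  are averages over probability spaces.
\<close>

lemma coordinate_line_eq:
  "(\<chi> i. if i = j then t else x $ i) = x + (t - x $ j) *\<^sub>R axis j (1::real)"
  by (simp add: vec_eq_iff axis_def)

lemma has_field_derivative_coordinate_line:
  fixes f :: "real^'n::finite \<Rightarrow> real"
  assumes "(f has_derivative f') (at x)"
  shows "((\<lambda>t. f (\<chi> i. if i = j then t else x $ i)) has_real_derivative f' (axis j 1)) (at (x $ j))"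
proof -
  have line: "((\<lambda>t. x + (t - x $ j) *\<^sub>R axis j (1::real)) has_derivative (\<lambda>s. s *\<^sub>R axis j 1))
      (at (x $ j))"
    by (auto intro!: derivative_eq_intros)
  have "((\<lambda>t. f (x + (t - x $ j) *\<^sub>R axis j (1::real))) has_derivative (\<lambda>s. f' (s *\<^sub>R axis j 1)))
      (at (x $ j))"
    using has_derivative_compose[OF line] assms by (simp add: o_def)
  moreover have "(\<lambda>s. f' (s *\<^sub>R axis j 1)) = (\<lambda>s. f' (axis j 1) * s)"
    using linear_scale[OF has_derivative_linear[OF assms]] by (auto simp: mult.commute)
  ultimately show ?thesis
    unfolding coordinate_line_eq has_field_derivative_def by simp
qed

lemma partial_deriv_eq_has_derivative:
  fixes f :: "real^'n::finite \<Rightarrow> real"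
  assumes "(f has_derivative f') (at x)"
  shows "partial_deriv j f x = f' (axis j 1)"
  unfolding partial_deriv_def
  using has_field_derivative_coordinate_line[OF assms] by (rule DERIV_imp_deriv)

lemma partial_deriv_eq_frechet_derivative:
  fixes f :: "real^'n::finite \<Rightarrow> real"
  assumes "f differentiable (at x)"
  shows "partial_deriv j f x = frechet_derivative f (at x) (axis j 1)"
  using assms by (intro partial_deriv_eq_has_derivative) (simp add: frechet_derivative_works[symmetric])

lemma frechet_derivative_eq_sum_partial_deriv:
  fixes f :: "real^'n::finite \<Rightarrow> real"
  assumes "f differentiable (at x)"
  shows "frechet_derivative f (at x) v = (\<Sum>l\<in>UNIV. v $ l * partial_deriv l f x)"
proof -
  have lin: "linear (frechet_derivative f (at x))"
    using assms frechet_derivative_works has_derivative_linear by blast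
  have "frechet_derivative f (at x) v = frechet_derivative f (at x) (\<Sum>l\<in>UNIV. v $ l *\<^sub>R axis l 1)"
    using basis_expansion[of v] by (simp add: scalar_mult_eq_scaleR)
  also have "\<dots> = (\<Sum>l\<in>UNIV. v $ l * partial_deriv l f x)"
    using lin by (simp add: linear_sum linear_scale partial_deriv_eq_frechet_derivative[OF assms])
  finally show ?thesis .
qed

lemma partial_deriv_const: "partial_deriv j (\<lambda>x. c) = (\<lambda>x. 0)"
  unfolding partial_deriv_def by (simp add: fun_eq_iff)

lemma partial_deriv_add:
  fixes f g :: "real^'n::finite \<Rightarrow> real"
  assumes "f differentiable (at x)" "g differentiable (at x)"
  shows "partial_deriv j (\<lambda>x. f x + g x) x = partial_deriv j f x + partial_deriv j g x"
proof -
  have "((\<lambda>x. f x + g x) has_derivative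
      (\<lambda>v. frechet_derivative f (at x) v + frechet_derivative g (at x) v)) (at x)"
    using assms by (intro has_derivative_add) (auto simp: frechet_derivative_works[symmetric])
  from partial_deriv_eq_has_derivative[OF this] show ?thesis
    by (simp add: partial_deriv_eq_frechet_derivative assms)
qed

lemma partial_deriv_mult:
  fixes f g :: "real^'n::finite \<Rightarrow> real"
  assumes "f differentiable (at x)" "g differentiable (at x)"
  shows "partial_deriv j (\<lambda>x. f x * g x) x = partial_deriv j f x * g x + f x * partial_deriv j g x"
proof -
  have "((\<lambda>x. f x * g x) has_derivative
      (\<lambda>v. f x * frechet_derivative g (at x) v + frechet_derivative f (at x) v * g x)) (at x)"
    using assms by (intro has_derivative_mult) (auto simp: frechet_derivative_works[symmetric])
  from partial_deriv_eq_has_derivative[OF this] show ?thesis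
    by (simp add: partial_deriv_eq_frechet_derivative assms)
qed

lemma partial_deriv_exp:
  fixes g :: "real^'n::finite \<Rightarrow> real"
  assumes "g differentiable (at x)"
  shows "partial_deriv j (\<lambda>x. exp (g x)) x = exp (g x) * partial_deriv j g x"
proof -
  have "((\<lambda>x. exp (g x)) has_derivative (\<lambda>v. frechet_derivative g (at x) v * exp (g x))) (at x)"
    using assms by (intro has_derivative_exp) (simp add: frechet_derivative_works[symmetric])
  from partial_deriv_eq_has_derivative[OF this] show ?thesis
    by (simp add: partial_deriv_eq_frechet_derivative[OF assms] mult.commute)
qed

lemma differentiable_exp:
  fixes g :: "'a::real_normed_vector \<Rightarrow> real"
  assumes "g differentiable (at x)"
  shows "(\<lambda>x. exp (g x)) differentiable (at x)"
  using has_derivative_exp assms unfolding differentiable_def by blast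

lemma C_k_on_Suc_imp_C_k_on: "C_k_on (Suc k) U f \<Longrightarrow> C_k_on k U f"
proof (induction k arbitrary: f)
  case 0
  then show ?case
    by (auto intro!: continuous_at_imp_continuous_on differentiable_imp_continuous_within)
next
  case (Suc k)
  then show ?case by simp
qed

lemma C_k_on_mono: "m \<le> k \<Longrightarrow> C_k_on k U f \<Longrightarrow> C_k_on m U f"
proof (induction k)
  case (Suc k)
  then show ?case
    using C_k_on_Suc_imp_C_k_on[of k U f] by (cases "m = Suc k") auto
qed simp

lemma C_k_on_imp_continuous_on: "C_k_on k U f \<Longrightarrow> continuous_on U f"
  using C_k_on_mono[of 0 k U f] by simp

section \<open>Vanishing gradient at the minimiser\<close>

lemma separated_minimum_le:
  fixes f :: "'a::real_normed_vector \<Rightarrow> real"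
  assumes sep: "\<forall>r>0. (INF x\<in>{x\<in>S. norm (x - x0) > r}. ereal (f x)) - ereal (f x0) > 0"
    and x: "x \<in> S"
  shows "f x0 \<le> f x"
proof (cases "x = x0")
  case False
  define r where "r = norm (x - x0) / 2"
  have "r > 0" "norm (x - x0) > r"
    using False by (simp_all add: r_def)
  then have "0 < (INF y\<in>{y\<in>S. norm (y - x0) > r}. ereal (f y)) - ereal (f x0)"
    and "(INF y\<in>{y\<in>S. norm (y - x0) > r}. ereal (f y)) \<le> ereal (f x)"
    using sep x by (auto intro: INF_lower)
  then have "0 < ereal (f x) - ereal (f x0)"
    by (meson ereal_minus_mono less_le_trans order_refl)
  then show ?thesis by simp
qed simp

lemma partial_deriv_eq_0_at_interior_min:
  fixes f :: "real^'n::finite \<Rightarrow> real"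
  assumes diff: "f differentiable (at x0)" and int: "x0 \<in> interior S"
    and min: "\<And>x. x \<in> S \<Longrightarrow> f x0 \<le> f x"
  shows "partial_deriv j f x0 = 0"
proof -
  obtain r where r: "r > 0" "ball x0 r \<subseteq> S"
    using int mem_interior by blast
  have D: "((\<lambda>t. f (\<chi> i. if i = j then t else x0 $ i)) has_real_derivative
      frechet_derivative f (at x0) (axis j 1)) (at (x0 $ j))"
    using diff by (intro has_field_derivative_coordinate_line) (simp add: frechet_derivative_works[symmetric])
  have "f (\<chi> i. if i = j then x0 $ j else x0 $ i) \<le> f (\<chi> i. if i = j then t else x0 $ i)"
    if "\<bar>x0 $ j - t\<bar> < r" for t
  proof -
    have "(\<chi> i. if i = j then t else x0 $ i) \<in> ball x0 r"
      using that by (simp add: coordinate_line_eq dist_norm abs_minus_commute)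
    moreover have "(\<chi> i. if i = j then x0 $ j else x0 $ i) = x0"
      by (simp add: vec_eq_iff)
    ultimately show ?thesis using r min by auto
  qed
  then have "frechet_derivative f (at x0) (axis j 1) = 0"
    using DERIV_local_min[OF D r(1)] by blast
  then show ?thesis by (simp add: partial_deriv_eq_frechet_derivative[OF diff])
qed

lemma onorm_frechet_derivative_le_sum_partial_deriv:
  fixes g :: "real^'n::finite \<Rightarrow> real"
  assumes "g differentiable (at y)"
  shows "onorm (frechet_derivative g (at y)) \<le> (\<Sum>i\<in>UNIV. \<bar>partial_deriv i g y\<bar>)"
proof (rule onorm_le)
  fix v :: "real^'n"
  have "norm (frechet_derivative g (at y) v) = \<bar>\<Sum>i\<in>UNIV. v $ i * partial_deriv i g y\<bar>"
    by (simp add: frechet_derivative_eq_sum_partial_deriv[OF assms])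
  also have "\<dots> \<le> (\<Sum>i\<in>UNIV. norm v * \<bar>partial_deriv i g y\<bar>)"
    by (rule order_trans[OF sum_abs sum_mono])
       (auto simp: abs_mult intro: mult_right_mono component_le_norm_cart)
  finally show "norm (frechet_derivative g (at y) v) \<le> (\<Sum>i\<in>UNIV. \<bar>partial_deriv i g y\<bar>) * norm v"
    by (simp add: sum_distrib_left mult.commute)
qed

lemma C1_vanishing_imp_linear_bound:
  fixes g :: "real^'n::finite \<Rightarrow> real"
  assumes U: "open U" "x0 \<in> U" and C1: "C_k_on 1 U g" and g0: "g x0 = 0"
  obtains e M where "e > 0" "\<And>y. y \<in> cball x0 e \<Longrightarrow> \<bar>g y\<bar> \<le> M * norm (y - x0)"
proof -
  obtain e where e: "e > 0" "cball x0 e \<subseteq> U"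
    using U open_contains_cball by blast
  have diff: "g differentiable (at y)" if "y \<in> cball x0 e" for y
    using C1 e(2) that by auto
  have "continuous_on (cball x0 e) (\<lambda>y. \<Sum>i\<in>UNIV. \<bar>partial_deriv i g y\<bar>)"
    using C1 e(2) by (intro continuous_intros) (auto intro: continuous_on_subset)
  then obtain M where M: "\<And>y. y \<in> cball x0 e \<Longrightarrow> norm (\<Sum>i\<in>UNIV. \<bar>partial_deriv i g y\<bar>) \<le> M"
    using continuous_on_compact_bound[OF compact_cball] by blast
  have "norm (g y - g x0) \<le> M * norm (y - x0)" if "y \<in> cball x0 e" for y
  proof (rule differentiable_bound[OF convex_cball _ _ that])
    show "(g has_derivative frechet_derivative g (at z)) (at z within cball x0 e)"
      if "z \<in> cball x0 e" for z
      using diff[OF that] frechet_derivative_works has_derivative_at_withinI by blast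
    show "onorm (frechet_derivative g (at z)) \<le> M" if "z \<in> cball x0 e" for z
      using onorm_frechet_derivative_le_sum_partial_deriv[OF diff[OF that]] M[OF that] by simp
  qed (use e in auto)
  then show ?thesis
    using that e(1) g0 by auto
qed

section \<open>Sequences of functions with eventually bounded derivatives\<close>

definition eventually_bounded_on :: "'a set \<Rightarrow> (nat \<Rightarrow> 'a \<Rightarrow> real) \<Rightarrow> bool" where
  "eventually_bounded_on S f \<longleftrightarrow> (\<exists>B. eventually (\<lambda>n. \<forall>x\<in>S. \<bar>f n x\<bar> \<le> B) sequentially)"

primrec bounded_derivs_on ::
    "(real^'n::finite) set \<Rightarrow> nat \<Rightarrow> (nat \<Rightarrow> real^'n \<Rightarrow> real) \<Rightarrow> bool" where
  "bounded_derivs_on S 0 f = eventually_bounded_on S f"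
| "bounded_derivs_on S (Suc m) f =
     (eventually_bounded_on S f \<and> (\<forall>n x. f n differentiable (at x)) \<and>
      (\<forall>j. bounded_derivs_on S m (\<lambda>n. partial_deriv j (f n))))"

lemma eventually_bounded_onI:
  "eventually (\<lambda>n. \<forall>x\<in>S. \<bar>f n x\<bar> \<le> B) sequentially \<Longrightarrow> eventually_bounded_on S f"
  unfolding eventually_bounded_on_def by blast

lemma eventually_bounded_on_add:
  assumes "eventually_bounded_on S f" "eventually_bounded_on S g"
  shows "eventually_bounded_on S (\<lambda>n x. f n x + g n x)"
proof -
  obtain B C where "eventually (\<lambda>n. \<forall>x\<in>S. \<bar>f n x\<bar> \<le> B) sequentially"
    "eventually (\<lambda>n. \<forall>x\<in>S. \<bar>g n x\<bar> \<le> C) sequentially"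
    using assms unfolding eventually_bounded_on_def by blast
  then have "eventually (\<lambda>n. \<forall>x\<in>S. \<bar>f n x + g n x\<bar> \<le> B + C) sequentially"
    by eventually_elim (auto intro: order_trans[OF abs_triangle_ineq] add_mono)
  then show ?thesis by (rule eventually_bounded_onI)
qed

lemma eventually_bounded_on_mult:
  assumes "eventually_bounded_on S f" "eventually_bounded_on S g"
  shows "eventually_bounded_on S (\<lambda>n x. f n x * g n x)"
proof -
  obtain B C where "eventually (\<lambda>n. \<forall>x\<in>S. \<bar>f n x\<bar> \<le> B) sequentially"
    "eventually (\<lambda>n. \<forall>x\<in>S. \<bar>g n x\<bar> \<le> C) sequentially"
    using assms unfolding eventually_bounded_on_def by blast
  then have "eventually (\<lambda>n. \<forall>x\<in>S. \<bar>f n x * g n x\<bar> \<le> B * C) sequentially"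
    by eventually_elim (auto simp: abs_mult intro: mult_mono order_trans[OF abs_ge_zero])
  then show ?thesis by (rule eventually_bounded_onI)
qed

lemma bounded_derivs_on_imp_eventually_bounded_on:
  "bounded_derivs_on S m f \<Longrightarrow> eventually_bounded_on S f"
  by (cases m) auto

lemma bounded_derivs_on_Suc_imp: "bounded_derivs_on S (Suc m) f \<Longrightarrow> bounded_derivs_on S m f"
  by (induction m arbitrary: f) auto

lemma bounded_derivs_on_iterated_partial_deriv:
  assumes "bounded_derivs_on S m f" "length js \<le> m"
  shows "bounded_derivs_on S (m - length js) (\<lambda>n. foldr partial_deriv js (f n))"
  using assms(2)
proof (induction js)
  case Nil
  then show ?case using assms(1) by simp
next
  case (Cons j js)
  then have "bounded_derivs_on S (m - length js) (\<lambda>n. foldr partial_deriv js (f n))"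
    by simp
  moreover have "m - length js = Suc (m - length (j # js))"
    using Cons.prems by simp
  ultimately have "bounded_derivs_on S (Suc (m - length (j # js))) (\<lambda>n. foldr partial_deriv js (f n))"
    by metis
  then show ?case by simp
qed

lemma bounded_derivs_on_zero: "bounded_derivs_on S m (\<lambda>n x. 0)"
  by (induction m) (auto simp: partial_deriv_const eventually_bounded_on_def)

lemma bounded_derivs_on_add:
  "bounded_derivs_on S m f \<Longrightarrow> bounded_derivs_on S m g \<Longrightarrow>
    bounded_derivs_on S m (\<lambda>n x. f n x + g n x)"
proof (induction m arbitrary: f g)
  case 0
  then show ?case by (simp add: eventually_bounded_on_add)
next
  case (Suc m)
  have "(\<lambda>n. partial_deriv j (\<lambda>x. f n x + g n x)) =
      (\<lambda>n x. partial_deriv j (f n) x + partial_deriv j (g n) x)" for j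
    using Suc.prems by (auto simp: fun_eq_iff intro!: partial_deriv_add)
  with Suc show ?case by (auto simp: eventually_bounded_on_add)
qed

lemma bounded_derivs_on_sum:
  "finite I \<Longrightarrow> (\<And>i. i \<in> I \<Longrightarrow> bounded_derivs_on S m (F i)) \<Longrightarrow>
    bounded_derivs_on S m (\<lambda>n x. \<Sum>i\<in>I. F i n x)"
  by (induction I rule: finite_induct) (auto intro: bounded_derivs_on_zero bounded_derivs_on_add)

lemma bounded_derivs_on_mult:
  "bounded_derivs_on S m f \<Longrightarrow> bounded_derivs_on S m g \<Longrightarrow>
    bounded_derivs_on S m (\<lambda>n x. f n x * g n x)"
proof (induction m arbitrary: f g)
  case 0
  then show ?case by (simp add: eventually_bounded_on_mult)
next
  case (Suc m)
  have "(\<lambda>n. partial_deriv j (\<lambda>x. f n x * g n x)) =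
      (\<lambda>n x. partial_deriv j (f n) x * g n x + f n x * partial_deriv j (g n) x)" for j
    using Suc.prems by (auto simp: fun_eq_iff intro!: partial_deriv_mult)
  moreover have "bounded_derivs_on S m f" "bounded_derivs_on S m g"
    using Suc.prems bounded_derivs_on_Suc_imp by blast+
  ultimately show ?case
    using Suc by (auto simp: eventually_bounded_on_mult intro!: bounded_derivs_on_add)
qed

lemma bounded_derivs_on_Suc_by_log_deriv:
  assumes diff: "\<forall>n x. E n differentiable (at x)" and bdd: "eventually_bounded_on S E"
    and log_deriv: "\<forall>j n. partial_deriv j (E n) = (\<lambda>x. E n x * W j n x)"
    and W: "\<forall>j. bounded_derivs_on S m (W j)"
  shows "bounded_derivs_on S (Suc m) E"
  using W
proof (induction m)
  case 0
  then show ?case using diff bdd log_deriv by (simp add: eventually_bounded_on_mult)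
next
  case (Suc m)
  then have "bounded_derivs_on S (Suc m) E"
    using bounded_derivs_on_Suc_imp by blast
  then have "bounded_derivs_on S (Suc m) (\<lambda>n x. E n x * W j n x)" for j
    using Suc.prems by (intro bounded_derivs_on_mult) auto
  moreover have "(\<lambda>n. partial_deriv j (E n)) = (\<lambda>n x. E n x * W j n x)" for j
    using log_deriv by simp
  ultimately show ?case
    using diff bdd by simp
qed

section \<open>Zooming into a point\<close>

definition zoomed ::
    "real^'n \<Rightarrow> (real^'n \<Rightarrow> real^'n) \<Rightarrow> (nat \<Rightarrow> real) \<Rightarrow> (nat \<Rightarrow> real) \<Rightarrow> (real^'n \<Rightarrow> real)
      \<Rightarrow> nat \<Rightarrow> real^'n \<Rightarrow> real" where
  "zoomed x0 L h c f n x = c n * f (x0 + h n *\<^sub>R L x)"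

lemma has_derivative_zoomed:
  fixes f :: "real^'n::finite \<Rightarrow> real"
  assumes L: "bounded_linear L" and f: "(f has_derivative f') (at (x0 + h n *\<^sub>R L x))"
  shows "(zoomed x0 L h c f n has_derivative (\<lambda>v. c n * f' (h n *\<^sub>R L v))) (at x)"
proof -
  have "((\<lambda>x. x0 + h n *\<^sub>R L x) has_derivative (\<lambda>v. h n *\<^sub>R L v)) (at x)"
    by (auto intro!: derivative_eq_intros bounded_linear.has_derivative[OF L])
  from has_derivative_compose[OF this f] show ?thesis
    unfolding zoomed_def[abs_def] by (auto intro: has_derivative_mult_right simp: o_def)
qed

lemma differentiable_zoomed:
  fixes f :: "real^'n::finite \<Rightarrow> real"
  assumes "bounded_linear L" "\<forall>y. f differentiable (at y)"
  shows "zoomed x0 L h c f n differentiable (at x)"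
  using has_derivative_zoomed[OF assms(1)] assms(2) unfolding differentiable_def by blast

lemma partial_deriv_zoomed:
  fixes f :: "real^'n::finite \<Rightarrow> real"
  assumes L: "bounded_linear L" and f: "\<forall>y. f differentiable (at y)"
  shows "partial_deriv j (zoomed x0 L h c f n) =
    (\<lambda>x. \<Sum>l\<in>UNIV. zoomed x0 L h (\<lambda>n. c n * h n * L (axis j 1) $ l) (partial_deriv l f) n x)"
proof
  fix x
  let ?y = "x0 + h n *\<^sub>R L x"
  let ?f' = "frechet_derivative f (at ?y)"
  have f': "(f has_derivative ?f') (at ?y)"
    using f frechet_derivative_works by blast
  have "(zoomed x0 L h c f n has_derivative (\<lambda>v. c n * ?f' (h n *\<^sub>R L v))) (at x)"
    using L f' by (rule has_derivative_zoomed)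
  then have "partial_deriv j (zoomed x0 L h c f n) x = c n * ?f' (h n *\<^sub>R L (axis j 1))"
    by (rule partial_deriv_eq_has_derivative)
  also have "\<dots> = c n * h n * (\<Sum>l\<in>UNIV. L (axis j 1) $ l * partial_deriv l f ?y)"
    using linear_scale[OF has_derivative_linear[OF f']] f
    by (simp add: frechet_derivative_eq_sum_partial_deriv)
  finally show "partial_deriv j (zoomed x0 L h c f n) x =
      (\<Sum>l\<in>UNIV. zoomed x0 L h (\<lambda>n. c n * h n * L (axis j 1) $ l) (partial_deriv l f) n x)"
    by (simp add: zoomed_def sum_distrib_left mult.assoc)
qed

lemma zoomed_eventually_bounded_on:
  fixes f :: "real^'n::finite \<Rightarrow> real"
  assumes S: "bounded S" and L: "bounded_linear L" and h: "\<forall>n. \<bar>h n\<bar> \<le> H"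
    and f: "continuous_on UNIV f" and c: "eventually (\<lambda>n. \<bar>c n\<bar> \<le> C) sequentially"
  shows "eventually_bounded_on S (zoomed x0 L h c f)"
proof -
  obtain K where K: "\<And>x. x \<in> S \<Longrightarrow> norm (L x) \<le> K"
    using bounded_linear_image[OF S L] unfolding bounded_iff by blast
  obtain M where M: "M \<ge> 0" "\<And>y. y \<in> cball x0 (H * K) \<Longrightarrow> norm (f y) \<le> M"
    using continuous_on_compact_bound[OF compact_cball continuous_on_subset[OF f]] by blast
  have f_bound: "\<bar>f (x0 + h n *\<^sub>R L x)\<bar> \<le> M" if "x \<in> S" for n x
  proof -
    have "norm (h n *\<^sub>R L x) \<le> H * K"
      using h K[OF that] by (simp add: mult_mono')
    then show ?thesis using M(2) by (simp add: dist_norm)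
  qed
  from c have "eventually (\<lambda>n. \<forall>x\<in>S. \<bar>zoomed x0 L h c f n x\<bar> \<le> C * M) sequentially"
    by eventually_elim (auto simp: zoomed_def abs_mult intro: mult_mono f_bound)
  then show ?thesis by (rule eventually_bounded_onI)
qed

text \<open>Differentiating a zoomed function gains a factor \<open>h\<^sub>n\<close>, which compensates growth of the
  coefficients \<open>c\<^sub>n\<close> as long as \<open>c\<^sub>n h\<^sub>n\<close> stays bounded.\<close>

lemma bounded_derivs_on_zoomed:
  fixes f :: "real^'n::finite \<Rightarrow> real"
  assumes S: "bounded S" and L: "bounded_linear L" and h: "\<forall>n. \<bar>h n\<bar> \<le> H"
  shows "C_k_on k UNIV f \<Longrightarrow> eventually_bounded_on S (zoomed x0 L h c f) \<Longrightarrow>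
    eventually (\<lambda>n. \<bar>c n * h n\<bar> \<le> C) sequentially \<Longrightarrow> bounded_derivs_on S k (zoomed x0 L h c f)"
proof (induction k arbitrary: c f C)
  case 0
  then show ?case by simp
next
  case (Suc k)
  have diff: "\<forall>y. f differentiable (at y)" and Ck: "C_k_on k UNIV (partial_deriv l f)" for l
    using Suc.prems(1) by simp_all
  have "bounded_derivs_on S k (zoomed x0 L h (\<lambda>n. c n * h n * L (axis j 1) $ l) (partial_deriv l f))"
    for j l
  proof (rule Suc.IH[OF Ck])
    have coeff: "eventually (\<lambda>n. \<bar>c n * h n * L (axis j 1) $ l\<bar> \<le> C * \<bar>L (axis j 1) $ l\<bar>) sequentially"
      using Suc.prems(3) by eventually_elim (simp add: abs_mult mult_right_mono)
    then show "eventually_bounded_on S (zoomed x0 L h (\<lambda>n. c n * h n * L (axis j 1) $ l) (partial_deriv l f))"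
      by (rule zoomed_eventually_bounded_on[OF S L h C_k_on_imp_continuous_on[OF Ck]])
    from coeff show
      "eventually (\<lambda>n. \<bar>c n * h n * L (axis j 1) $ l * h n\<bar> \<le> C * \<bar>L (axis j 1) $ l\<bar> * H) sequentially"
      by eventually_elim (use h in \<open>auto simp: abs_mult intro!: mult_mono'\<close>)
  qed
  then show ?case
    using Suc.prems(2) differentiable_zoomed[OF L diff]
    by (simp add: partial_deriv_zoomed[OF L diff] bounded_derivs_on_sum)
qed

text \<open>The key cancellation: linear vanishing at \<open>x0\<close> turns the naive bound \<open>O(n h\<^sub>n)\<close>
  into \<open>O(n h\<^sub>n\<^sup>2)\<close>.\<close>

lemma zoomed_vanishing_eventually_bounded_on:
  fixes g :: "real^'n::finite \<Rightarrow> real"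
  assumes S: "bounded S" and L: "bounded_linear L"
    and h: "\<forall>n. 0 \<le> h n" "\<forall>n. real n * (h n)\<^sup>2 \<le> c" "h \<longlonglongrightarrow> 0"
    and g: "e > 0" "\<And>y. y \<in> cball x0 e \<Longrightarrow> \<bar>g y\<bar> \<le> M * norm (y - x0)"
  shows "eventually_bounded_on S (zoomed x0 L h (\<lambda>n. - real n * h n * a) g)"
proof -
  obtain K where K: "K > 0" "\<And>x. x \<in> S \<Longrightarrow> norm (L x) \<le> K"
    using bounded_linear_image[OF S L] unfolding bounded_pos by blast
  have "eventually (\<lambda>n. h n < e / K) sequentially"
    using order_tendstoD(2)[OF h(3)] g(1) K(1) by simp
  then have "eventually (\<lambda>n. \<forall>x\<in>S. \<bar>zoomed x0 L h (\<lambda>n. - real n * h n * a) g n x\<bar> \<le> \<bar>a\<bar> * \<bar>M\<bar> * K * c)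
      sequentially"
  proof eventually_elim
    case (elim n)
    show ?case
    proof
      fix x assume x: "x \<in> S"
      have dist: "norm (h n *\<^sub>R L x) \<le> h n * K"
        using h(1) K(2)[OF x] by (simp add: mult_left_mono)
      also have "\<dots> \<le> e"
        using elim K(1) by (simp add: pos_less_divide_eq)
      finally have "\<bar>g (x0 + h n *\<^sub>R L x)\<bar> \<le> \<bar>M\<bar> * (h n * K)"
        using g(2)[of "x0 + h n *\<^sub>R L x"] dist
        by (force simp: dist_norm intro: order_trans[OF _ mult_mono] abs_ge_self)
      then have "\<bar>zoomed x0 L h (\<lambda>n. - real n * h n * a) g n x\<bar> \<le> real n * h n * \<bar>a\<bar> * (\<bar>M\<bar> * (h n * K))"
        using h(1) by (simp add: zoomed_def abs_mult mult_left_mono)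
      also have "\<dots> = \<bar>a\<bar> * \<bar>M\<bar> * K * (real n * (h n)\<^sup>2)"
        by (simp add: algebra_simps power2_eq_square)
      also have "\<dots> \<le> \<bar>a\<bar> * \<bar>M\<bar> * K * c"
        using h(2) K(1) by (simp add: mult_left_mono)
      finally show "\<bar>zoomed x0 L h (\<lambda>n. - real n * h n * a) g n x\<bar> \<le> \<bar>a\<bar> * \<bar>M\<bar> * K * c" .
    qed
  qed
  then show ?thesis by (rule eventually_bounded_onI)
qed

lemma bounded_derivs_on_exp_zoomed:
  fixes \<Phi> :: "real^'n::finite \<Rightarrow> real" and L :: "real^'n \<Rightarrow> real^'n"
  assumes S: "bounded S" and L: "bounded_linear L"
    and nonneg: "\<forall>x. \<Phi> x \<ge> 0" and smooth: "C_k_on (Suc k) UNIV \<Phi>"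
    and crit: "\<forall>l. partial_deriv l \<Phi> x0 = 0"
    and smooth_loc: "open U" "x0 \<in> U" "C_k_on 2 U \<Phi>"
    and h: "\<forall>n. 0 \<le> h n" "\<forall>n. real n * (h n)\<^sup>2 \<le> c" "h \<longlonglongrightarrow> 0"
  shows "bounded_derivs_on S (Suc k) (\<lambda>n x. exp (zoomed x0 L h (\<lambda>n. - real n) \<Phi> n x))"
proof (rule bounded_derivs_on_Suc_by_log_deriv)
  obtain H where H: "\<forall>n. \<bar>h n\<bar> \<le> H"
    using convergent_imp_Bseq[OF convergentI[OF h(3)]] unfolding Bseq_def by auto
  have diff: "\<forall>y. \<Phi> differentiable (at y)"
    using smooth by simp
  define W where "W j n x =
    (\<Sum>l\<in>UNIV. zoomed x0 L h (\<lambda>n. - real n * h n * L (axis j 1) $ l) (partial_deriv l \<Phi>) n x)"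
    for j n x
  show "\<forall>n x. (\<lambda>x. exp (zoomed x0 L h (\<lambda>n. - real n) \<Phi> n x)) differentiable (at x)"
    by (intro allI differentiable_exp differentiable_zoomed[OF L diff])
  show "eventually_bounded_on S (\<lambda>n x. exp (zoomed x0 L h (\<lambda>n. - real n) \<Phi> n x))"
    using nonneg by (intro eventually_bounded_onI[of _ _ 1]) (simp add: zoomed_def)
  show "\<forall>j n. partial_deriv j (\<lambda>x. exp (zoomed x0 L h (\<lambda>n. - real n) \<Phi> n x)) =
      (\<lambda>x. exp (zoomed x0 L h (\<lambda>n. - real n) \<Phi> n x) * W j n x)"
    by (simp add: fun_eq_iff partial_deriv_exp differentiable_zoomed[OF L diff]
        partial_deriv_zoomed[OF L diff] W_def)
  have "bounded_derivs_on S k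
      (zoomed x0 L h (\<lambda>n. - real n * h n * L (axis j 1) $ l) (partial_deriv l \<Phi>))" for j l
  proof (rule bounded_derivs_on_zoomed[OF S L H])
    show "C_k_on k UNIV (partial_deriv l \<Phi>)"
      using smooth by simp
    have "C_k_on 1 U (partial_deriv l \<Phi>)"
      using smooth_loc(3) by (simp add: numeral_2_eq_2)
    then obtain e M where "e > 0" "\<And>y. y \<in> cball x0 e \<Longrightarrow> \<bar>partial_deriv l \<Phi> y\<bar> \<le> M * norm (y - x0)"
      using C1_vanishing_imp_linear_bound[OF smooth_loc(1,2)] crit by metis
    then show "eventually_bounded_on S (zoomed x0 L h (\<lambda>n. - real n * h n * L (axis j 1) $ l)
        (partial_deriv l \<Phi>))"
      by (rule zoomed_vanishing_eventually_bounded_on[OF S L h])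
    have "\<bar>- real n * h n * L (axis j 1) $ l * h n\<bar> = real n * (h n)\<^sup>2 * \<bar>L (axis j 1) $ l\<bar>" for n
      using h(1) by (simp add: abs_mult power2_eq_square)
    then show "eventually (\<lambda>n. \<bar>- real n * h n * L (axis j 1) $ l * h n\<bar> \<le> c * \<bar>L (axis j 1) $ l\<bar>)
        sequentially"
      using h(2) by (simp add: mult_right_mono)
  qed
  then show "\<forall>j. bounded_derivs_on S k (W j)"
    unfolding W_def by (auto intro: bounded_derivs_on_sum)
qed

section \<open>Bounding the weighted norm\<close>

lemma One_vec_nth: "(One :: real^'n::finite) $ i = 1"
  by (simp add: cart_eq_inner_axis)

lemma mem_unit_cube_iff: "x \<in> (unit_cube :: (real^'n::finite) set) \<longleftrightarrow> (\<forall>i. x $ i \<in> {-1/2..1/2})"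
  by (simp only: unit_cube_def mem_box_cart vector_uminus_component vector_scaleR_component One_vec_nth)
    auto

lemma bounded_unit_cube: "bounded (unit_cube :: (real^'n::finite) set)"
  by (simp add: unit_cube_def)

lemma glued_point_in_unit_cube:
  assumes "y \<in> space (cube_meas nu)" "z \<in> space (cube_meas (UNIV - nu))"
  shows "(\<chi> i. if i \<in> nu then y i else z i) \<in> (unit_cube :: (real^'n::finite) set)"
  using assms by (auto simp: mem_unit_cube_iff cube_meas_def space_PiM space_restrict_space PiE_iff)

lemma prob_space_cube_meas: "prob_space (cube_meas I)"
  unfolding cube_meas_def
  by (intro prob_space_PiM prob_space_restrict_space) simp_all

lemma (in prob_space) abs_integral_le_const:
  fixes f :: "'a \<Rightarrow> real"
  assumes "0 \<le> B" "\<And>x. x \<in> space M \<Longrightarrow> \<bar>f x\<bar> \<le> B"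
  shows "\<bar>integral\<^sup>L M f\<bar> \<le> B"
proof (cases "integrable M f")
  case True
  have "\<bar>integral\<^sup>L M f\<bar> \<le> integral\<^sup>L M (\<lambda>x. \<bar>f x\<bar>)"
    using integral_norm_bound[of M f] by simp
  also have "\<dots> \<le> B"
    using True assms(2) by (intro integral_le_const) auto
  finally show ?thesis .
qed (simp add: assms(1) not_integrable_integral_eq)

lemma abs_gamma_norm_le:
  fixes f :: "real^'n::finite \<Rightarrow> real"
  assumes \<gamma>: "\<forall>nu. \<gamma> nu > 0" and B: "\<forall>nu. B nu \<ge> 0"
    and bound: "\<forall>nu. \<forall>x\<in>unit_cube. \<bar>mixed_deriv nu f x\<bar> \<le> B nu"
  shows "\<bar>gamma_norm \<gamma> f\<bar> \<le> sqrt (\<Sum>nu\<in>Pow UNIV. (B nu)\<^sup>2 / \<gamma> nu)"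
proof -
  let ?inner = "\<lambda>nu y. \<integral>z. mixed_deriv nu f (\<chi> i. if i \<in> nu then y i else z i) \<partial>cube_meas (UNIV - nu)"
  let ?T = "\<lambda>nu. (1 / \<gamma> nu) * (\<integral>y. (?inner nu y)\<^sup>2 \<partial>cube_meas nu)"
  have "\<bar>?T nu\<bar> \<le> (B nu)\<^sup>2 / \<gamma> nu" for nu
  proof -
    have "\<bar>?inner nu y\<bar> \<le> B nu" if "y \<in> space (cube_meas nu)" for y
      using bound B that glued_point_in_unit_cube
      by (intro prob_space.abs_integral_le_const[OF prob_space_cube_meas]) blast+
    then have "\<bar>\<integral>y. (?inner nu y)\<^sup>2 \<partial>cube_meas nu\<bar> \<le> (B nu)\<^sup>2"
      by (intro prob_space.abs_integral_le_const[OF prob_space_cube_meas])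
        (use B in \<open>auto simp: power2_le_iff_abs_le\<close>)
    then show ?thesis
      using \<gamma>[rule_format, of nu] by (simp add: abs_mult divide_right_mono)
  qed
  then have "\<bar>\<Sum>nu\<in>Pow UNIV. ?T nu\<bar> \<le> (\<Sum>nu\<in>Pow UNIV. (B nu)\<^sup>2 / \<gamma> nu)"
    by (intro order_trans[OF sum_abs sum_mono])
  then show ?thesis
    by (simp add: gamma_norm_def real_sqrt_abs'[symmetric])
qed

lemma mixed_deriv_eq_foldr:
  obtains js where "length js = card nu" "mixed_deriv nu = foldr partial_deriv js"
proof -
  let ?js = "SOME js. set js = nu \<and> distinct js"
  have "set ?js = nu \<and> distinct ?js"
    by (rule someI_ex[OF finite_distinct_list]) simp
  then show ?thesis
    using that[of ?js] distinct_card by (fastforce simp: mixed_deriv_def fun_eq_iff)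
qed

lemma gamma_norm_bigo_1:
  fixes F :: "nat \<Rightarrow> real^'n::finite \<Rightarrow> real"
  assumes F: "bounded_derivs_on unit_cube CARD('n) F" and \<gamma>: "\<forall>nu. \<gamma> nu > 0"
  shows "(\<lambda>n. gamma_norm \<gamma> (F n)) \<in> O(\<lambda>_. 1)"
proof -
  have "eventually_bounded_on unit_cube (\<lambda>n. mixed_deriv nu (F n))" for nu :: "'n set"
  proof -
    obtain js where js: "length js = card nu" "mixed_deriv nu = foldr partial_deriv js"
      by (rule mixed_deriv_eq_foldr)
    have "length js \<le> CARD('n)"
      using js(1) card_mono[of UNIV nu] by simp
    from bounded_derivs_on_iterated_partial_deriv[OF F this]
    have "eventually_bounded_on unit_cube (\<lambda>n. foldr partial_deriv js (F n))"
      by (rule bounded_derivs_on_imp_eventually_bounded_on)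
    then show ?thesis by (simp add: js(2))
  qed
  then have "\<forall>nu. \<exists>B. eventually (\<lambda>n. \<forall>x\<in>unit_cube. \<bar>mixed_deriv nu (F n) x\<bar> \<le> B) sequentially"
    unfolding eventually_bounded_on_def by blast
  then obtain B where "\<forall>nu. eventually (\<lambda>n. \<forall>x\<in>unit_cube. \<bar>mixed_deriv nu (F n) x\<bar> \<le> B nu) sequentially"
    by (auto dest!: choice)
  then have "eventually (\<lambda>n. \<forall>x\<in>unit_cube. \<bar>mixed_deriv nu (F n) x\<bar> \<le> max (B nu) 0) sequentially"
    for nu
    by (rule eventually_mono[OF spec[of _ nu]]) (auto intro: max.coboundedI1)
  then have "eventually (\<lambda>n. \<forall>nu. \<forall>x\<in>unit_cube. \<bar>mixed_deriv nu (F n) x\<bar> \<le> max (B nu) 0) sequentially"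
    by (rule eventually_all_finite)
  then have "eventually (\<lambda>n. norm (gamma_norm \<gamma> (F n)) \<le>
      sqrt (\<Sum>nu\<in>Pow UNIV. (max (B nu) 0)\<^sup>2 / \<gamma> nu) * norm (1::real)) sequentially"
  proof eventually_elim
    case (elim n)
    then show ?case
      using abs_gamma_norm_le[OF \<gamma>, of "\<lambda>nu. max (B nu) 0" "F n"] by simp
  qed
  then show ?thesis by (rule bigoI)
qed

lemma bounded_linear_scale_coordinates:
  "bounded_linear (\<lambda>x::real^'n::finite. Q *v (\<chi> i. x $ i / s i))"
  by (rule bounded_linear_compose[OF matrix_vector_mul_bounded_linear])
    (auto simp: linear_conv_bounded_linear[symmetric] vec_eq_iff add_divide_distrib intro!: linearI)

theorem lemma5:
  fixes \<Phi> :: "real^('n::{finite,linorder}) \<Rightarrow> real"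
    and xs :: "real^('n::{finite,linorder})"
    and Q :: "real^('n::{finite,linorder})^('n::{finite,linorder})"
    and lam :: "('n::{finite,linorder}) \<Rightarrow> real"
    and \<tau> :: real
    and \<alpha> :: "nat \<Rightarrow> real"
    and \<beta> :: "('n::{finite,linorder}) \<Rightarrow> real"
  assumes nonneg: "\<forall>x. \<Phi> x \<ge> 0"
    and xs_int: "xs \<in> interior unit_cube"
    and sep: "\<forall>r>0. (INF x\<in>{x\<in>unit_cube. norm (x - xs) > r}. ereal (\<Phi> x)) - ereal (\<Phi> xs) > 0"
    and smooth_loc: "\<exists>U. open U \<and> xs \<in> U \<and> C_k_on (4 * CARD(('n::{finite,linorder})) + 3) U \<Phi>"
    and posdef: "\<forall>v. v \<noteq> 0 \<longrightarrow>
        v \<bullet> ((\<chi> i j. partial_deriv i (partial_deriv j \<Phi>) xs) *v v) > 0"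
    and smooth_glob: "C_k_on CARD(('n::{finite,linorder})) UNIV \<Phi>"
    and Q_orth: "orthogonal_matrix Q"
    and lam_pos: "\<forall>i. lam i > 0"
    and eig: "(\<chi> i j. partial_deriv i (partial_deriv j \<Phi>) xs)
                = Q ** (\<chi> i j. if i = j then lam i else 0) ** transpose Q"
    and tau: "0 < \<tau>" "\<tau> < 1"
    and alpha: "\<alpha> 0 = 1" "\<alpha> 1 = 1" "\<forall>k. \<alpha> k > 0"
    and beta_pos: "\<forall>j. \<beta> j > 0"
    and beta_mono: "\<forall>i j. i \<le> j \<longrightarrow> \<beta> j \<le> \<beta> i"
  shows "(\<lambda>n::nat. gamma_norm (pod_weight \<alpha> \<beta>)
            (\<lambda>x. exp (- real n * \<Phi> (xs + sqrt (2 * \<bar>ln \<tau>\<bar> / real n) *\<^sub>R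
                     (Q *v (\<chi> i. x $ i / sqrt (lam i)))))))
         \<in> O(\<lambda>_. 1)"
proof -
  define h where "h n = sqrt (2 * \<bar>ln \<tau>\<bar> / real n)" for n :: nat
  define L where "L x = Q *v (\<chi> i. x $ i / sqrt (lam i))" for x
  have h: "\<forall>n. 0 \<le> h n" "\<forall>n. real n * (h n)\<^sup>2 \<le> 2 * \<bar>ln \<tau>\<bar>" "h \<longlonglongrightarrow> 0"
    using tendsto_real_sqrt[OF lim_const_over_n] by (auto simp: h_def[abs_def])
  have L: "bounded_linear L"
    unfolding L_def[abs_def] by (rule bounded_linear_scale_coordinates)
  obtain k where k: "CARD('n) = Suc k"
    using zero_less_card_finite not0_implies_Suc by blast
  obtain U where U: "open U" "xs \<in> U" "C_k_on 2 U \<Phi>"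
    using smooth_loc C_k_on_mono[of 2 "4 * CARD('n) + 3"] by auto
  have crit: "\<forall>l. partial_deriv l \<Phi> xs = 0"
  proof
    fix l
    have "\<Phi> differentiable (at xs)"
      using smooth_glob k by simp
    then show "partial_deriv l \<Phi> xs = 0"
      using xs_int separated_minimum_le[OF sep] by (rule partial_deriv_eq_0_at_interior_min)
  qed
  have "bounded_derivs_on unit_cube CARD('n) (\<lambda>n x. exp (zoomed xs L h (\<lambda>n. - real n) \<Phi> n x))"
    using smooth_glob unfolding k
    by (rule bounded_derivs_on_exp_zoomed[OF bounded_unit_cube L nonneg _ crit U h])
  moreover have "\<forall>nu. pod_weight \<alpha> \<beta> nu > 0"
    using alpha(3) beta_pos by (simp add: pod_weight_def prod_pos)
  ultimately have "(\<lambda>n. gamma_norm (pod_weight \<alpha> \<beta>) (\<lambda>x. exp (zoomed xs L h (\<lambda>n. - real n) \<Phi> n x)))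
      \<in> O(\<lambda>_. 1)"
    by (rule gamma_norm_bigo_1)
  then show ?thesis
    by (simp add: zoomed_def h_def L_def)
qed

end
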